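(* Assume $r=\sigma_a/\sigma>3/2$. Then for every $s\ge1$, every suboptimal arm $k$ and every $T$, $$a_{k,s}:=E\big[\min\{N_{1,s}(\tau_k),T\}\big]\le M(r):=1.1+\big(1-(3/(2r))^2\big)^{-1/2}.$$
   Context: Setting: arm $k\in[K]$ has i.i.d. rewards $Y_{k,1},Y_{k,2},\dots\sim N(\mu_k,\sigma^2)$; arm 1 is optimal, $\mu_1=\max_k\mu_k$, $\Delta_k=\mu_1-\mu_k>0$ for the suboptimal arm $k$ considered, and $\tau_k=(\mu_1+\mu_k)/2$. For $s\ge1$: $\mathcal H_{k,s}=(Y_{k,1},\dots,Y_{k,s})$, $\bar Y_{k,s}=s^{-1}\sum_{i=1}^sY_{k,i}$, $\mathrm{RSS}_{k,s}=\sum_{i=1}^s(Y_{k,i}-\bar Y_{k,s})^2$. Given $\sigma_a>0$, $\mathrm{PRSS}_{s}=2(s+2)\sigma_a^2$ and $r=\sigma_a/\sigma$. The ReBoot index given $\mathcal H_{k,s}$ is $\hat\mu^*_{k,s}=\bar Y_{k,s}+\frac1{s+2}\sum_{i=1}^{s+2}w_ie_{k,i}$ with $e_{k,i}=Y_{k,i}-\bar Y_{k,s}$ ($i\le s$), $e_{k,s+1}=\sqrt{s+2}\sigma_a$, $e_{k,s+2}=-\sqrt{s+2}\sigma_a$, and $w_i$ i.i.d. $N(0,1)$ independent of the rewards; thus conditionally on $\mathcal H_{k,s}$, $\hat\mu^*_{k,s}\sim N\big(\bar Y_{k,s},(s+2)^{-2}(\mathrm{RSS}_{k,s}+\mathrm{PRSS}_s)\big)$.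 Define $Q_{k,s}(\tau)=P(\hat\mu^*_{k,s}>\tau\mid\mathcal H_{k,s})$ and $N_{1,s}(\tau)=Q_{1,s}(\tau)^{-1}-1$. *)

theory Defs
  imports "HOL-Probability.Probability"
begin

text \<open>History of one arm: a sequence y :: nat => real, with y 1, ..., y s the first s rewards.\<close>

definition ybar :: "(nat \<Rightarrow> real) \<Rightarrow> nat \<Rightarrow> real" where
  "ybar y s = (\<Sum>i=1..s. y i) / real s"

definition RSS :: "(nat \<Rightarrow> real) \<Rightarrow> nat \<Rightarrow> real" where
  "RSS y s = (\<Sum>i=1..s. (y i - ybar y s)^2)"

definition PRSS :: "real \<Rightarrow> nat \<Rightarrow> real" where
  "PRSS \<sigma>a s = 2 * (real s + 2) * \<sigma>a^2"

text \<open>Conditional law of the ReBoot index given the history: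
  N(ybar, (RSS + PRSS)/(s+2)^2); normal_density takes mean and standard deviation.\<close>

definition reboot_law :: "real \<Rightarrow> (nat \<Rightarrow> real) \<Rightarrow> nat \<Rightarrow> real measure" where
  "reboot_law \<sigma>a y s =
     density lborel (\<lambda>x. ennreal (normal_density (ybar y s)
        (sqrt (RSS y s + PRSS \<sigma>a s) / (real s + 2)) x))"

definition Qrb :: "real \<Rightarrow> (nat \<Rightarrow> real) \<Rightarrow> nat \<Rightarrow> real \<Rightarrow> real" where
  "Qrb \<sigma>a y s \<tau> = measure (reboot_law \<sigma>a y s) {\<tau><..}"

definition Nrb :: "real \<Rightarrow> (nat \<Rightarrow> real) \<Rightarrow> nat \<Rightarrow> real \<Rightarrow> real" where
  "Nrb \<sigma>a y s \<tau> = 1 / Qrb \<sigma>a y s \<tau> - 1"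

definition Mbound :: "real \<Rightarrow> real" where
  "Mbound r = 11/10 + 1 / sqrt (1 - (3 / (2 * r))^2)"

end

theory Submission
  imports Defs "HOL-Real_Asymp.Real_Asymp"
begin

text \<open>
  For every l > 0, D_l(z) = z + (z^2 + 4 + l^2)/(2l) gives a lower bound 2 \<phi>(z) / D_l(z) for the
  standard normal tail on z \<ge> 0: its negative has derivative between 0 and \<phi>(z) and vanishes at
  infinity. Given the history, the ReBoot index is normal with standard deviation at least
  sd0 = \<surd>PRSS / (s + 2). If its mean lies above \<tau> then N_{1,s}(\<tau>) \<le> 1; otherwise
  N_{1,s}(\<tau>) \<le> D_l(c W) / (2 \<phi>(c W)) - 1, where W = (\<mu>_1 - ybar) \<surd>s / \<sigma> ~ N(0,1) and
  c = \<sigma> / (\<surd>s sd0) satisfies c^2 = (s + 2)/(2 s r^2) \<le> (2/3) (3/(2r))^2 < 2/3. The expectation of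
  this majorant is a Gaussian integral with variance 1/(1 - c^2), computed in closed form through
  the first two absolute moments; the optimal l and a numerical bound for \<pi> give M(r).
\<close>

section \<open>A family of lower bounds for the standard normal tail\<close>

definition mills_den :: "real \<Rightarrow> real \<Rightarrow> real" where
  "mills_den l z = z + (z\<^sup>2 + 4 + l\<^sup>2) / (2 * l)"

definition normal_tail_lb :: "real \<Rightarrow> real \<Rightarrow> real" where
  "normal_tail_lb l z = 2 * std_normal_density z / mills_den l z"

definition normal_tail_lb_deriv :: "real \<Rightarrow> real \<Rightarrow> real" where
  "normal_tail_lb_deriv l z =
     2 * std_normal_density z * (z * mills_den l z + (1 + z / l)) / (mills_den l z)\<^sup>2"

lemma mills_den_eq: "l > 0 \<Longrightarrow> mills_den l z = ((z + l)\<^sup>2 + 4) / (2 * l)"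
  unfolding mills_den_def by (simp add: field_simps power2_eq_square)

lemma mills_den_pos: "l > 0 \<Longrightarrow> mills_den l z > 0"
  using mills_den_eq[of l z] by (smt (verit) divide_pos_pos zero_le_power2)

lemma mills_den_ge_2:
  assumes l: "l > 0" and z: "z \<ge> 0"
  shows "mills_den l z \<ge> 2"
proof -
  have "(4 + l\<^sup>2) / (2 * l) \<ge> 2"
    using l zero_le_power2[of "l - 2"] by (simp add: field_simps power2_eq_square algebra_simps)
  moreover have "mills_den l z = z + z\<^sup>2 / (2 * l) + (4 + l\<^sup>2) / (2 * l)"
    unfolding mills_den_def by (simp add: add_divide_distrib)
  ultimately show ?thesis using l z by (smt (verit) divide_nonneg_pos zero_le_power2)
qed

lemma mills_den_sq_ge:
  assumes l: "l > 0" and z: "z \<ge> 0"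
  shows "2 * (z * mills_den l z + (1 + z / l)) \<le> (mills_den l z)\<^sup>2"
proof -
  have expand: "4 * l\<^sup>2 * ((mills_den l z)\<^sup>2 - 2 * (z * mills_den l z + (1 + z / l)))
      = (z\<^sup>2 - l\<^sup>2 + 4)\<^sup>2 + 8 * l * (l - z)"
    using l unfolding mills_den_def by (simp add: field_simps power2_eq_square)
  have "(z\<^sup>2 - l\<^sup>2 + 4)\<^sup>2 + 8 * l * (l - z) \<ge> 0"
  proof (cases "z \<le> l")
    case True
    then show ?thesis using l by (simp add: add_nonneg_nonneg)
  next
    case False
    define d where "d = z - l"
    have "l * d > 0" using False l by (simp add: d_def)
    moreover have "z\<^sup>2 - l\<^sup>2 + 4 \<ge> 2 * l * d + 4"
      using zero_le_power2[of "z - l"] by (simp add: d_def power2_eq_square algebra_simps)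
    then have "(z\<^sup>2 - l\<^sup>2 + 4)\<^sup>2 \<ge> (2 * l * d + 4)\<^sup>2"
      using \<open>l * d > 0\<close> by (intro power_mono) auto
    moreover have "(2 * l * d + 4)\<^sup>2 + 8 * l * (l - z) = 4 * (l * d)\<^sup>2 + 8 * (l * d) + 16"
      by (simp add: d_def power2_eq_square algebra_simps)
    ultimately show ?thesis by (smt (verit) zero_le_power2)
  qed
  then have "0 \<le> 4 * l\<^sup>2 * ((mills_den l z)\<^sup>2 - 2 * (z * mills_den l z + (1 + z / l)))"
    using expand by simp
  then show ?thesis using l by (simp add: zero_le_mult_iff)
qed

lemma normal_tail_lb_has_deriv:
  assumes l: "l > 0"
  shows "((\<lambda>z. - normal_tail_lb l z) has_real_derivative normal_tail_lb_deriv l z) (at z)"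
proof -
  define D where "D = mills_den l z"
  define E where "E = exp (- z\<^sup>2 / 2)"
  have D: "D > 0" unfolding D_def by (rule mills_den_pos[OF l])
  have "((\<lambda>z. mills_den l z) has_real_derivative (1 + z / l)) (at z)"
    unfolding mills_den_def using l by (auto intro!: derivative_eq_intros simp: field_simps)
  then have "((\<lambda>z. exp (- z\<^sup>2 / 2) / mills_den l z) has_real_derivative
      (E * (- z) * D - E * (1 + z / l)) / (D * D)) (at z)"
    using D unfolding D_def E_def by (auto intro!: derivative_eq_intros simp: power2_eq_square)
  then have "((\<lambda>z. - ((2 / sqrt (2 * pi)) * (exp (- z\<^sup>2 / 2) / mills_den l z))) has_real_derivative
      - ((2 / sqrt (2 * pi)) * ((E * (- z) * D - E * (1 + z / l)) / (D * D)))) (at z)"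
    by (intro DERIV_minus DERIV_cmult)
  moreover have "- ((2 / sqrt (2 * pi)) * ((E * (- z) * D - E * (1 + z / l)) / (D * D)))
      = normal_tail_lb_deriv l z"
    unfolding normal_tail_lb_deriv_def std_normal_density_def D_def[symmetric] E_def[symmetric]
    using D by (simp add: field_simps power2_eq_square)
  moreover have "(\<lambda>z. - normal_tail_lb l z)
      = (\<lambda>z. - ((2 / sqrt (2 * pi)) * (exp (- z\<^sup>2 / 2) / mills_den l z)))"
    unfolding normal_tail_lb_def std_normal_density_def by (simp add: fun_eq_iff)
  ultimately show ?thesis by simp
qed

lemma normal_tail_lb_tendsto_0: "l > 0 \<Longrightarrow> ((\<lambda>z. - normal_tail_lb l z) \<longlongrightarrow> 0) at_top"
  unfolding normal_tail_lb_def mills_den_def std_normal_density_def by real_asymp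

lemma normal_tail_lb_deriv_nonneg: "l > 0 \<Longrightarrow> z \<ge> 0 \<Longrightarrow> normal_tail_lb_deriv l z \<ge> 0"
  unfolding normal_tail_lb_deriv_def using mills_den_pos[of l z]
  by (auto intro!: divide_nonneg_pos mult_nonneg_nonneg add_nonneg_nonneg)

lemma normal_tail_lb_deriv_le:
  assumes l: "l > 0" and z: "z \<ge> 0"
  shows "normal_tail_lb_deriv l z \<le> std_normal_density z"
proof -
  have "normal_tail_lb_deriv l z
      = std_normal_density z * (2 * (z * mills_den l z + (1 + z / l)) / (mills_den l z)\<^sup>2)"
    unfolding normal_tail_lb_deriv_def by simp
  also have "\<dots> \<le> std_normal_density z * 1"
    using mills_den_sq_ge[OF l z] mills_den_pos[OF l, of z] by (intro mult_left_mono) auto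
  finally show ?thesis by simp
qed

lemma normal_tail_lb_deriv_measurable [measurable]: "normal_tail_lb_deriv l \<in> borel_measurable borel"
  unfolding normal_tail_lb_deriv_def mills_den_def normal_density_def by measurable

lemma normal_tail_lb_measurable [measurable]: "normal_tail_lb l \<in> borel_measurable borel"
  unfolding normal_tail_lb_def mills_den_def normal_density_def by measurable

lemma normal_tail_lb_pos: "l > 0 \<Longrightarrow> normal_tail_lb l z > 0"
  unfolding normal_tail_lb_def using mills_den_pos[of l z] by (simp add: normal_density_pos)

lemma normal_tail_lb_le_half:
  assumes l: "l > 0" and z: "z \<ge> 0"
  shows "normal_tail_lb l z \<le> 1/2"
proof -
  have "sqrt (2 * pi) \<ge> 2"
    using pi_ge_two by (simp add: real_le_rsqrt)
  have "std_normal_density z \<le> 1/2"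
  proof -
    have "exp (- (z\<^sup>2 / 2)) \<le> 1" by simp
    then show ?thesis
      using \<open>sqrt (2 * pi) \<ge> 2\<close> unfolding std_normal_density_def
      by (simp add: divide_le_eq) (use \<open>exp (- (z\<^sup>2 / 2)) \<le> 1\<close> in linarith)
  qed
  then show ?thesis
    unfolding normal_tail_lb_def using mills_den_ge_2[OF l z] by (simp add: divide_le_eq)
qed

lemma normal_tail_lb_antimono:
  assumes l: "l > 0" and ab: "0 \<le> a" "a \<le> b"
  shows "normal_tail_lb l b \<le> normal_tail_lb l a"
proof -
  have "- normal_tail_lb l a \<le> - normal_tail_lb l b"
    by (rule DERIV_nonneg_imp_nondecreasing[OF ab(2)])
      (use normal_tail_lb_has_deriv[OF l] normal_tail_lb_deriv_nonneg[OF l] ab in force)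
  then show ?thesis by simp
qed

lemma std_normal_tail_ge_lb:
  assumes l: "l > 0" and a: "a \<ge> 0"
  shows "ennreal (normal_tail_lb l a) \<le> (\<integral>\<^sup>+x. ennreal (std_normal_density x) * indicator {a..} x \<partial>lborel)"
proof -
  have "(\<integral>\<^sup>+x. ennreal (normal_tail_lb_deriv l x) * indicator {a..} x \<partial>lborel) = 0 - (- normal_tail_lb l a)"
    by (rule nn_integral_FTC_atLeast[OF normal_tail_lb_deriv_measurable normal_tail_lb_has_deriv[OF l]
          normal_tail_lb_deriv_nonneg[OF l] normal_tail_lb_tendsto_0[OF l]])
      (use a in auto)
  then have "ennreal (normal_tail_lb l a) = (\<integral>\<^sup>+x. ennreal (normal_tail_lb_deriv l x) * indicator {a..} x \<partial>lborel)"
    by simp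
  also have "\<dots> \<le> (\<integral>\<^sup>+x. ennreal (std_normal_density x) * indicator {a..} x \<partial>lborel)"
    using a by (intro nn_integral_mono) (auto split: split_indicator intro!: normal_tail_lb_deriv_le[OF l])
  finally show ?thesis .
qed

section \<open>Tails of a normal law\<close>

lemma nn_integral_normal_density_affine:
  assumes sd: "sd > 0" and A[measurable]: "A \<in> sets borel"
  shows "(\<integral>\<^sup>+x. ennreal (normal_density m sd x) * indicator A x \<partial>lborel)
       = (\<integral>\<^sup>+z. ennreal (std_normal_density z) * indicator A (m + sd * z) \<partial>lborel)"
proof -
  have "(\<integral>\<^sup>+x. ennreal (normal_density m sd x) * indicator A x \<partial>lborel)
      = ennreal \<bar>sd\<bar> * (\<integral>\<^sup>+z. ennreal (normal_density m sd (m + sd * z)) * indicator A (m + sd * z) \<partial>lborel)"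
    by (rule nn_integral_real_affine) (use sd in auto)
  also have "\<dots> = (\<integral>\<^sup>+z. ennreal sd * (ennreal (normal_density m sd (m + sd * z)) * indicator A (m + sd * z)) \<partial>lborel)"
    using sd by (subst nn_integral_cmult) auto
  also have "\<dots> = (\<integral>\<^sup>+z. ennreal (std_normal_density z) * indicator A (m + sd * z) \<partial>lborel)"
  proof (intro nn_integral_cong)
    fix z :: real
    have "sd * normal_density m sd (m + sd * z) = std_normal_density z"
      using sd unfolding normal_density_def
      by (simp add: real_sqrt_mult power_mult_distrib field_simps)
    then show "ennreal sd * (ennreal (normal_density m sd (m + sd * z)) * indicator A (m + sd * z))
      = ennreal (std_normal_density z) * indicator A (m + sd * z)"
      using sd by (simp add: ennreal_mult'[symmetric] mult.assoc[symmetric])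
  qed
  finally show ?thesis .
qed

lemma emeasure_normal_tail:
  assumes sd: "sd > 0"
  shows "emeasure (density lborel (normal_density m sd)) {t<..}
     = (\<integral>\<^sup>+z. ennreal (std_normal_density z) * indicator {(t - m) / sd..} z \<partial>lborel)"
proof -
  have "emeasure (density lborel (normal_density m sd)) {t<..}
      = (\<integral>\<^sup>+z. ennreal (std_normal_density z) * indicator {t<..} (m + sd * z) \<partial>lborel)"
    by (subst emeasure_density) (auto intro: nn_integral_normal_density_affine[OF sd])
  also have "\<dots> = (\<integral>\<^sup>+z. ennreal (std_normal_density z) * indicator {(t - m) / sd<..} z \<partial>lborel)"
  proof (intro nn_integral_cong)
    fix z :: real
    have "(t < m + sd * z) = ((t - m) / sd < z)" using sd by (simp add: field_simps)
    then show "ennreal (std_normal_density z) * indicator {t<..} (m + sd * z) =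
        ennreal (std_normal_density z) * indicator {(t - m) / sd<..} z"
      by (simp split: split_indicator)
  qed
  also have "\<dots> = (\<integral>\<^sup>+z. ennreal (std_normal_density z) * indicator {(t - m) / sd..} z \<partial>lborel)"
    by (intro nn_integral_cong_AE)
      (use AE_lborel_singleton[of "(t - m) / sd"] in \<open>auto elim!: eventually_mono split: split_indicator\<close>)
  finally show ?thesis .
qed

lemma std_normal_nonneg_half:
  "(\<integral>\<^sup>+z. ennreal (std_normal_density z) * indicator {0..} z \<partial>lborel) = ennreal (1/2)"
proof -
  let ?f = "\<lambda>z::real. indicator {0..} z *\<^sub>R std_normal_density z"
  have int: "integrable lborel ?f"
    by (intro integrable_mult_indicator) auto
  have "has_bochner_integral lborel ?f (integral\<^sup>L lborel ?f)"
    using int by (rule has_bochner_integral_integrable)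
  then have "has_bochner_integral lborel std_normal_density (2 *\<^sub>R integral\<^sup>L lborel ?f)"
    by (rule has_bochner_integral_even_function) (simp add: std_normal_density_def)
  moreover have "has_bochner_integral lborel std_normal_density 1"
    using integral_normal_density[of 1 0] integrable_normal_density[of 1 0]
    by (simp add: has_bochner_integral_iff)
  ultimately have half: "integral\<^sup>L lborel ?f = 1/2"
    using has_bochner_integral_eq by fastforce
  have "(\<integral>\<^sup>+z. ennreal (std_normal_density z) * indicator {0..} z \<partial>lborel) = (\<integral>\<^sup>+z. ennreal (?f z) \<partial>lborel)"
    by (intro nn_integral_cong) (auto split: split_indicator)
  also have "\<dots> = ennreal (1/2)"
    unfolding half[symmetric] by (rule nn_integral_eq_integral[OF int]) auto
  finally show ?thesis .
qed

lemma normal_tail_ge_lb: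
  assumes sd: "sd > 0" and l: "l > 0" and t: "t \<ge> m"
  shows "normal_tail_lb l ((t - m) / sd) \<le> measure (density lborel (normal_density m sd)) {t<..}"
proof -
  interpret prob_space "density lborel (normal_density m sd)"
    using prob_space_normal_density[OF sd] .
  have "ennreal (normal_tail_lb l ((t - m) / sd)) \<le> emeasure (density lborel (normal_density m sd)) {t<..}"
    unfolding emeasure_normal_tail[OF sd] using sd t by (intro std_normal_tail_ge_lb[OF l]) simp
  then show ?thesis by (simp add: emeasure_eq_measure)
qed

lemma normal_tail_ge_half:
  assumes sd: "sd > 0" and t: "t \<le> m"
  shows "1/2 \<le> measure (density lborel (normal_density m sd)) {t<..}"
proof -
  interpret prob_space "density lborel (normal_density m sd)"
    using prob_space_normal_density[OF sd] .
  have "(t - m) / sd \<le> 0" using sd t by (simp add: divide_nonpos_pos)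
  then have "ennreal (1/2) \<le> (\<integral>\<^sup>+z. ennreal (std_normal_density z) * indicator {(t - m) / sd..} z \<partial>lborel)"
    unfolding std_normal_nonneg_half[symmetric] by (intro nn_integral_mono) (auto split: split_indicator)
  then have "ennreal (1/2) \<le> ennreal (prob {t<..})"
    unfolding emeasure_normal_tail[OF sd, symmetric] emeasure_eq_measure .
  then show ?thesis by (metis ennreal_le_iff measure_nonneg)
qed

section \<open>A majorant of the odds and its Gaussian expectation\<close>

definition odds_majorant :: "real \<Rightarrow> real \<Rightarrow> real" where
  "odds_majorant l x = (if x \<le> 0 then 1 else 1 / normal_tail_lb l x - 1)"

lemma odds_majorant_measurable [measurable]: "odds_majorant l \<in> borel_measurable borel"
  unfolding odds_majorant_def by measurable

lemma odds_majorant_nonneg: "l > 0 \<Longrightarrow> odds_majorant l x \<ge> 0"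
  using normal_tail_lb_pos[of l x] normal_tail_lb_le_half[of l x]
  by (auto simp: odds_majorant_def field_simps)

lemma odds_majorant_reflect_le:
  assumes l: "l > 0" and c: "c \<ge> 0"
  shows "odds_majorant l (c * x) + odds_majorant l (c * - x) \<le> 1 / normal_tail_lb l (c * \<bar>x\<bar>)"
proof -
  have two_le: "2 \<le> 1 / normal_tail_lb l y" if "y \<ge> 0" for y
    using normal_tail_lb_pos[OF l, of y] normal_tail_lb_le_half[OF l that] by (simp add: field_simps)
  show ?thesis
  proof (cases "c = 0 \<or> x = 0")
    case True
    then show ?thesis using two_le[of 0] by (auto simp: odds_majorant_def)
  next
    case False
    with c have "c > 0" "x \<noteq> 0" by auto
    then show ?thesis
      by (cases "x > 0") (auto simp: odds_majorant_def mult_le_0_iff zero_le_mult_iff abs_of_neg)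
  qed
qed

text \<open>Dividing \<phi>(x) by \<phi>(c x) leaves a centred normal density of variance 1/(1 - c^2).\<close>

lemma std_normal_div_tail_lb_eq:
  assumes l: "l > 0" and c: "0 \<le> c" "c < 1"
  defines "\<rho> \<equiv> 1 / sqrt (1 - c\<^sup>2)"
  shows "std_normal_density x / normal_tail_lb l (c * \<bar>x\<bar>)
    = sqrt (2 * pi) * \<rho> / 2 * (normal_density 0 \<rho> x * (c * \<bar>x\<bar> + (c\<^sup>2 * x\<^sup>2 + 4 + l\<^sup>2) / (2 * l)))"
proof -
  have b: "1 - c\<^sup>2 > 0" using c by (simp add: power_less_one_iff)
  have rho: "\<rho> > 0" unfolding \<rho>_def using b by simp
  have rho2: "\<rho>\<^sup>2 = 1 / (1 - c\<^sup>2)" unfolding \<rho>_def using b by (simp add: power_divide)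
  have D: "mills_den l (c * \<bar>x\<bar>) = c * \<bar>x\<bar> + (c\<^sup>2 * x\<^sup>2 + 4 + l\<^sup>2) / (2 * l)"
    unfolding mills_den_def by (simp add: power_mult_distrib)
  have exp_ratio: "exp (- (x\<^sup>2 / 2)) / exp (- ((c * \<bar>x\<bar>)\<^sup>2 / 2)) = exp (- (x\<^sup>2 / (2 * \<rho>\<^sup>2)))"
  proof -
    have "- (x\<^sup>2 / 2) - (- ((c * \<bar>x\<bar>)\<^sup>2 / 2)) = - (x\<^sup>2 / (2 * \<rho>\<^sup>2))"
      unfolding rho2 using b by (simp add: power_mult_distrib field_simps)
    then show ?thesis by (simp flip: exp_diff)
  qed
  have "std_normal_density x / normal_tail_lb l (c * \<bar>x\<bar>)
     = mills_den l (c * \<bar>x\<bar>) / 2 * (exp (- (x\<^sup>2 / 2)) / exp (- ((c * \<bar>x\<bar>)\<^sup>2 / 2)))"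
    unfolding normal_tail_lb_def std_normal_density_def by (simp add: field_simps)
  also have "\<dots> = sqrt (2 * pi) * \<rho> / 2 * (normal_density 0 \<rho> x * mills_den l (c * \<bar>x\<bar>))"
    unfolding exp_ratio normal_density_def using rho by (simp add: real_sqrt_mult field_simps)
  finally show ?thesis unfolding D .
qed

lemma has_bochner_integral_normal_abs_quadratic:
  assumes rho: "\<rho> > 0" and l: "l > 0"
  shows "has_bochner_integral lborel
     (\<lambda>x. normal_density 0 \<rho> x * (c * \<bar>x\<bar> + (c\<^sup>2 * x\<^sup>2 + 4 + l\<^sup>2) / (2 * l)))
     (c * \<rho> * sqrt (2 / pi) + (c\<^sup>2 * \<rho>\<^sup>2 + 4 + l\<^sup>2) / (2 * l))"
proof -
  have m1: "has_bochner_integral lborel (\<lambda>x. normal_density 0 \<rho> x * \<bar>x\<bar>) (\<rho> * sqrt (2 / pi))"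
    using normal_moment_abs_odd[OF rho, of 0 0] by simp
  have "has_bochner_integral lborel (\<lambda>x. normal_density 0 \<rho> x * (x - 0) ^ (2 * 1))
      (fact (2 * 1) / ((2 / \<rho>\<^sup>2) ^ 1 * fact 1))"
    by (rule normal_moment_even[OF rho])
  then have m2: "has_bochner_integral lborel (\<lambda>x. normal_density 0 \<rho> x * x\<^sup>2) (\<rho>\<^sup>2)"
    by (rule has_bochner_integral_cong[THEN iffD1, rotated -1])
      (use rho in \<open>auto simp: field_simps power2_eq_square\<close>)
  have m0: "has_bochner_integral lborel (\<lambda>x. normal_density 0 \<rho> x) 1"
    using integrable_normal_density[OF rho, of 0] integral_normal_density[OF rho, of 0]
    by (simp add: has_bochner_integral_iff)
  have "has_bochner_integral lborel (\<lambda>x. c * (normal_density 0 \<rho> x * \<bar>x\<bar>)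
      + ((c\<^sup>2 / (2 * l)) * (normal_density 0 \<rho> x * x\<^sup>2) + ((4 + l\<^sup>2) / (2 * l)) * normal_density 0 \<rho> x))
     (c * (\<rho> * sqrt (2 / pi)) + ((c\<^sup>2 / (2 * l)) * \<rho>\<^sup>2 + ((4 + l\<^sup>2) / (2 * l)) * 1))"
    by (intro has_bochner_integral_add has_bochner_integral_mult_right m0 m1 m2)
  then show ?thesis
    by (rule has_bochner_integral_cong[THEN iffD1, rotated -1]) (use l in \<open>auto simp: field_simps\<close>)
qed

text \<open>Since \<phi> is even, the integral is half that of the symmetrised integrand, which the
  previous two lemmas bound in closed form.\<close>

lemma integral_odds_majorant_le:
  assumes l: "l > 0" and c: "0 \<le> c" "c < 1"
  defines "\<rho> \<equiv> 1 / sqrt (1 - c\<^sup>2)"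
  shows "integrable lborel (\<lambda>x. std_normal_density x * odds_majorant l (c * x))"
    and "(\<integral>x. std_normal_density x * odds_majorant l (c * x) \<partial>lborel)
       \<le> sqrt (2 * pi) * \<rho> / 4 * (c * \<rho> * sqrt (2 / pi) + (c\<^sup>2 * \<rho>\<^sup>2 + 4 + l\<^sup>2) / (2 * l))"
proof -
  let ?G = "\<lambda>x. odds_majorant l (c * x)"
  define V where "V = sqrt (2 * pi) * \<rho> / 2 * (c * \<rho> * sqrt (2 / pi) + (c\<^sup>2 * \<rho>\<^sup>2 + 4 + l\<^sup>2) / (2 * l))"
  define K where "K x = std_normal_density x / normal_tail_lb l (c * \<bar>x\<bar>)" for x
  have rho: "\<rho> > 0" unfolding \<rho>_def using c by (simp add: power_less_one_iff)
  have K: "has_bochner_integral lborel K V"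
    unfolding V_def K_def std_normal_div_tail_lb_eq[OF l c, folded \<rho>_def]
    by (intro has_bochner_integral_mult_right has_bochner_integral_normal_abs_quadratic rho l)
  then have iK: "integrable lborel K" by (simp add: has_bochner_integral_iff)
  have G0: "?G x \<ge> 0" for x by (rule odds_majorant_nonneg[OF l])
  have bnd: "std_normal_density x * ?G x + std_normal_density x * ?G (- x) \<le> K x" for x
    using mult_left_mono[OF odds_majorant_reflect_le[OF l c(1), of x], of "std_normal_density x"]
    unfolding K_def by (simp add: algebra_simps)
  have nonneg: "0 \<le> std_normal_density x * ?G y" for x y using G0 by simp
  have "\<bar>std_normal_density x * ?G x\<bar> \<le> \<bar>K x\<bar>" "\<bar>std_normal_density x * ?G (- x)\<bar> \<le> \<bar>K x\<bar>" for x
    using bnd[of x] nonneg[of x x] nonneg[of x "- x"] by linarith+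
  then have i1: "integrable lborel (\<lambda>x. std_normal_density x * ?G x)"
    and i2: "integrable lborel (\<lambda>x. std_normal_density x * ?G (- x))"
    by (auto intro!: Bochner_Integration.integrable_bound[OF iK] AE_I2)
  have "(\<integral>x. std_normal_density x * ?G x \<partial>lborel) = (\<integral>x. std_normal_density x * ?G (- x) \<partial>lborel)"
    using lborel_integral_real_affine[of "-1" "\<lambda>x. std_normal_density x * ?G x" 0]
    by (simp add: std_normal_density_def)
  then have "2 * (\<integral>x. std_normal_density x * ?G x \<partial>lborel)
     = (\<integral>x. std_normal_density x * ?G x + std_normal_density x * ?G (- x) \<partial>lborel)"
    using i1 i2 by simp
  also have "\<dots> \<le> (\<integral>x. K x \<partial>lborel)"
    by (intro integral_mono bnd iK Bochner_Integration.integrable_add i1 i2)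
  also have "\<dots> = V" using K by (simp add: has_bochner_integral_integral_eq)
  finally show "(\<integral>x. std_normal_density x * ?G x \<partial>lborel)
       \<le> sqrt (2 * pi) * \<rho> / 4 * (c * \<rho> * sqrt (2 / pi) + (c\<^sup>2 * \<rho>\<^sup>2 + 4 + l\<^sup>2) / (2 * l))"
    unfolding V_def by simp
  show "integrable lborel (\<lambda>x. std_normal_density x * ?G x)" by (rule i1)
qed

section \<open>Choice of l and the numerical bound\<close>

text \<open>l = sqrt (c^2 \<rho>^2 + 4) minimises (c^2 \<rho>^2 + 4 + l^2)/(2l), which then equals l.\<close>

lemma majorant_integral_optimal_l:
  assumes c: "0 \<le> c" "c < 1"
  defines "\<rho> \<equiv> 1 / sqrt (1 - c\<^sup>2)"
  defines "l \<equiv> sqrt (c\<^sup>2 * \<rho>\<^sup>2 + 4)"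
  shows "sqrt (2 * pi) * \<rho> / 4 * (c * \<rho> * sqrt (2 / pi) + (c\<^sup>2 * \<rho>\<^sup>2 + 4 + l\<^sup>2) / (2 * l))
     = (c + sqrt (pi * (4 - 3 * c\<^sup>2) / 2)) / (2 * (1 - c\<^sup>2))"
proof -
  have b: "1 - c\<^sup>2 > 0" using c by (simp add: power_less_one_iff)
  have rho: "\<rho> > 0" unfolding \<rho>_def using b by simp
  have rho2: "\<rho>\<^sup>2 = 1 / (1 - c\<^sup>2)" unfolding \<rho>_def using b by (simp add: power_divide)
  have l: "l > 0" unfolding l_def by (simp add: add_nonneg_pos)
  have "c\<^sup>2 * \<rho>\<^sup>2 + 4 = l\<^sup>2" unfolding l_def by simp
  then have "(c\<^sup>2 * \<rho>\<^sup>2 + 4 + l\<^sup>2) / (2 * l) = l"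
    using l by (simp add: power2_eq_square)
  then have "sqrt (2 * pi) * \<rho> / 4 * (c * \<rho> * sqrt (2 / pi) + (c\<^sup>2 * \<rho>\<^sup>2 + 4 + l\<^sup>2) / (2 * l))
      = sqrt (2 * pi) * sqrt (2 / pi) * c * \<rho>\<^sup>2 / 4 + sqrt (2 * pi) * (\<rho> * l) / 4"
    by (simp add: algebra_simps power2_eq_square)
  also have "sqrt (2 * pi) * sqrt (2 / pi) = 2"
    by (simp add: real_sqrt_mult[symmetric])
  also have "\<rho> * l = sqrt (4 - 3 * c\<^sup>2) / (1 - c\<^sup>2)"
  proof -
    have "\<rho> * l = sqrt (\<rho>\<^sup>2 * (c\<^sup>2 * \<rho>\<^sup>2 + 4))" unfolding l_def using rho by (simp add: real_sqrt_mult)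
    also have "\<rho>\<^sup>2 * (c\<^sup>2 * \<rho>\<^sup>2 + 4) = (4 - 3 * c\<^sup>2) / (1 - c\<^sup>2)\<^sup>2"
      unfolding rho2 using b by (simp add: field_simps power2_eq_square)
    finally show ?thesis using b by (simp add: real_sqrt_divide)
  qed
  also have "sqrt (2 * pi) * (sqrt (4 - 3 * c\<^sup>2) / (1 - c\<^sup>2))
      = 2 * sqrt (pi * (4 - 3 * c\<^sup>2) / 2) / (1 - c\<^sup>2)"
  proof -
    have "sqrt (2 * pi) * sqrt (4 - 3 * c\<^sup>2) = sqrt (4 * (pi * (4 - 3 * c\<^sup>2) / 2))"
      by (simp only: real_sqrt_mult[symmetric]) simp
    also have "\<dots> = sqrt 4 * sqrt (pi * (4 - 3 * c\<^sup>2) / 2)"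
      by (rule real_sqrt_mult)
    finally show ?thesis by simp
  qed
  also have "2 * c * \<rho>\<^sup>2 / 4 + 2 * sqrt (pi * (4 - 3 * c\<^sup>2) / 2) / (1 - c\<^sup>2) / 4
      = (c + sqrt (pi * (4 - 3 * c\<^sup>2) / 2)) / (2 * (1 - c\<^sup>2))"
  proof -
    have "2 * c * (1 / d) / 4 + 2 * X / d / 4 = (c + X) / (2 * d)" if "d > 0" for d X :: real
      using that by (simp add: field_simps)
    then show ?thesis unfolding rho2 using b by blast
  qed
  finally show ?thesis .
qed

text \<open>From \<surd>(1 - t) \<le> 1 - t/2 and \<surd>(2 \<pi>) < 2.5067.\<close>

lemma sqrt_pi_tangent_le:
  assumes "0 \<le> u" "u \<le> 1"
  shows "sqrt (pi * (4 - 3 * u) / 2) \<le> 25067/10000 * (1 - 3/8 * u)"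
proof -
  have "pi * (4 - 3 * u) / 2 = 2 * pi * (1 - 3/4 * u)" by (simp add: field_simps)
  also have "\<dots> \<le> 2 * pi * (1 - 3/8 * u)\<^sup>2"
    using assms pi_gt_zero by (intro mult_left_mono) (auto simp: power2_eq_square algebra_simps)
  also have "\<dots> \<le> (25067/10000)\<^sup>2 * (1 - 3/8 * u)\<^sup>2"
    using pi_approx by (intro mult_right_mono) (auto simp: power2_eq_square)
  also have "\<dots> = (25067/10000 * (1 - 3/8 * u))\<^sup>2"
    by (simp only: power_mult_distrib)
  finally show ?thesis using assms by (intro real_le_lsqrt) auto
qed

lemma numeric_bound_on_interval:
  fixes a b c q :: real
  assumes "0 \<le> a" "a \<le> c" "c \<le> b" "b < 1" "c\<^sup>2 < 2/3"
    and "q \<ge> 0" "q\<^sup>2 * (1 - 3/2 * a\<^sup>2) \<le> 1"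
    and "b + 25067/10000 * (1 - 3/8 * a\<^sup>2) \<le> 2 * (1 - b\<^sup>2) * (11/10 + q)"
  shows "(c + 25067/10000 * (1 - 3/8 * c\<^sup>2)) / (2 * (1 - c\<^sup>2)) \<le> 11/10 + 1 / sqrt (1 - 3/2 * c\<^sup>2)"
proof -
  have a2: "a\<^sup>2 \<le> c\<^sup>2" and c2: "c\<^sup>2 \<le> b\<^sup>2" using assms by (intro power_mono; linarith)+
  have b2: "b\<^sup>2 < 1" using assms by (simp add: power_less_one_iff)
  have pa: "0 < 1 - 3/2 * a\<^sup>2" and pc: "0 < 1 - 3/2 * c\<^sup>2" using a2 assms by linarith+
  have "(q * sqrt (1 - 3/2 * a\<^sup>2))\<^sup>2 \<le> 1\<^sup>2" using pa assms by (simp add: power_mult_distrib)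
  then have "q * sqrt (1 - 3/2 * a\<^sup>2) \<le> 1" by (rule power2_le_imp_le) simp
  then have "q \<le> 1 / sqrt (1 - 3/2 * a\<^sup>2)" using pa by (simp add: le_divide_eq)
  also have "\<dots> \<le> 1 / sqrt (1 - 3/2 * c\<^sup>2)"
    using a2 pc by (intro divide_left_mono) auto
  finally have q: "q \<le> 1 / sqrt (1 - 3/2 * c\<^sup>2)" .
  have num0: "0 \<le> c + 25067/10000 * (1 - 3/8 * c\<^sup>2)" using assms by simp
  have "(c + 25067/10000 * (1 - 3/8 * c\<^sup>2)) / (2 * (1 - c\<^sup>2))
      \<le> (c + 25067/10000 * (1 - 3/8 * c\<^sup>2)) / (2 * (1 - b\<^sup>2))"
    using c2 b2 num0 by (intro divide_left_mono) auto
  also have "\<dots> \<le> (b + 25067/10000 * (1 - 3/8 * a\<^sup>2)) / (2 * (1 - b\<^sup>2))"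
  proof (rule divide_right_mono)
    have "25067/10000 * (1 - 3/8 * c\<^sup>2) \<le> 25067/10000 * (1 - 3/8 * a\<^sup>2)" using a2 by simp
    then show "c + 25067/10000 * (1 - 3/8 * c\<^sup>2) \<le> b + 25067/10000 * (1 - 3/8 * a\<^sup>2)"
      using assms(3) by linarith
  qed (use b2 in simp)
  also have "\<dots> \<le> 11/10 + q" using assms(8) b2 by (simp add: divide_le_eq mult.commute)
  finally show ?thesis using q by linarith
qed

lemma numeric_bound:
  fixes c :: real
  assumes "0 \<le> c" "c\<^sup>2 < 2/3"
  shows "(c + 25067/10000 * (1 - 3/8 * c\<^sup>2)) / (2 * (1 - c\<^sup>2)) \<le> 11/10 + 1 / sqrt (1 - 3/2 * c\<^sup>2)"
proof -
  have "c < 8165/10000"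
  proof (rule ccontr)
    assume "\<not> c < 8165/10000"
    then have "(8165/10000) * (8165/10000) \<le> c * c" by (intro mult_mono) auto
    with assms show False by (simp add: power2_eq_square)
  qed
  then consider "c \<le> 524/1000" | "524/1000 \<le> c \<and> c \<le> 631/1000" | "631/1000 \<le> c \<and> c \<le> 686/1000"
    | "686/1000 \<le> c \<and> c \<le> 724/1000" | "724/1000 \<le> c \<and> c \<le> 757/1000"
    | "757/1000 \<le> c \<and> c \<le> 795/1000" | "795/1000 \<le> c \<and> c \<le> 8165/10000"
    by linarith
  then show ?thesis
  proof cases
    case 1 with assms show ?thesis
      by (intro numeric_bound_on_interval[where a=0 and b="524/1000" and q=1])
        (simp_all, simp_all add: power2_eq_square)
  next
    case 2 with assms show ?thesis
      by (intro numeric_bound_on_interval[where a="524/1000" and b="631/1000" and q="13/10"])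
        (simp_all, simp_all add: power2_eq_square)
  next
    case 3 with assms show ?thesis
      by (intro numeric_bound_on_interval[where a="631/1000" and b="686/1000" and q="157/100"])
        (simp_all, simp_all add: power2_eq_square)
  next
    case 4 with assms show ?thesis
      by (intro numeric_bound_on_interval[where a="686/1000" and b="724/1000" and q="46/25"])
        (simp_all, simp_all add: power2_eq_square)
  next
    case 5 with assms show ?thesis
      by (intro numeric_bound_on_interval[where a="724/1000" and b="757/1000" and q="54/25"])
        (simp_all, simp_all add: power2_eq_square)
  next
    case 6 with assms show ?thesis
      by (intro numeric_bound_on_interval[where a="757/1000" and b="795/1000" and q="133/50"])
        (simp_all, simp_all add: power2_eq_square)
  next
    case 7 with assms show ?thesis
      by (intro numeric_bound_on_interval[where a="795/1000" and b="8165/10000" and q="219/50"])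
        (simp_all, simp_all add: power2_eq_square)
  qed
qed

lemma exists_odds_majorant_integral_le:
  assumes c: "0 \<le> c" "c\<^sup>2 < 2/3"
  obtains l where "l > 0" "integrable lborel (\<lambda>x. std_normal_density x * odds_majorant l (c * x))"
    "(\<integral>x. std_normal_density x * odds_majorant l (c * x) \<partial>lborel) \<le> 11/10 + 1 / sqrt (1 - 3/2 * c\<^sup>2)"
proof -
  define \<rho> where "\<rho> = 1 / sqrt (1 - c\<^sup>2)"
  define l where "l = sqrt (c\<^sup>2 * \<rho>\<^sup>2 + 4)"
  have l: "l > 0" unfolding l_def by (simp add: add_nonneg_pos)
  have c1: "c < 1" using c power_less_imp_less_base[of c 2 1] by simp
  have "(c + sqrt (pi * (4 - 3 * c\<^sup>2) / 2)) / (2 * (1 - c\<^sup>2))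
      \<le> (c + 25067/10000 * (1 - 3/8 * c\<^sup>2)) / (2 * (1 - c\<^sup>2))"
    using sqrt_pi_tangent_le[of "c\<^sup>2"] c by (intro divide_right_mono add_left_mono) auto
  also have "\<dots> \<le> 11/10 + 1 / sqrt (1 - 3/2 * c\<^sup>2)" by (rule numeric_bound[OF c])
  finally show ?thesis
    using that[OF l integral_odds_majorant_le(1)[OF l c(1) c1]] integral_odds_majorant_le(2)[OF l c(1) c1]
    unfolding majorant_integral_optimal_l[OF c(1) c1] \<rho>_def l_def by linarith
qed

section \<open>The odds of the ReBoot index\<close>

lemma normal_odds_le_odds_majorant:
  fixes m :: real
  assumes sd0: "0 < sd0" "sd0 \<le> sd" and l: "l > 0" and \<tau>: "\<tau> < m1"
  defines "Q \<equiv> measure (density lborel (normal_density m sd)) {\<tau><..}"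
  shows "0 \<le> 1 / Q - 1 \<and> 1 / Q - 1 \<le> odds_majorant l ((m1 - m) / sd0)"
proof (cases "\<tau> \<le> m")
  case True
  have "1/2 \<le> Q" unfolding Q_def using sd0 True by (intro normal_tail_ge_half) auto
  moreover have "Q \<le> 1"
    unfolding Q_def using sd0 by (intro prob_space.prob_le_1 prob_space_normal_density) auto
  moreover have "1 \<le> odds_majorant l ((m1 - m) / sd0)"
    using normal_tail_lb_pos[OF l] normal_tail_lb_le_half[OF l, of "(m1 - m) / sd0"]
    by (auto simp: odds_majorant_def field_simps)
  ultimately have "1 \<le> 1 / Q" "1 / Q \<le> 2" "1 \<le> odds_majorant l ((m1 - m) / sd0)"
    by (simp_all add: field_simps)
  then show ?thesis by linarith
next
  case False
  define z where "z = (\<tau> - m) / sd"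
  have z: "0 \<le> z" "z \<le> (m1 - m) / sd0"
  proof -
    show "0 \<le> z" unfolding z_def using False sd0 by simp
    have "z \<le> (\<tau> - m) / sd0" unfolding z_def using False sd0 by (intro divide_left_mono) auto
    also have "\<dots> \<le> (m1 - m) / sd0" using \<tau> sd0 by (intro divide_right_mono) auto
    finally show "z \<le> (m1 - m) / sd0" .
  qed
  have "normal_tail_lb l ((m1 - m) / sd0) \<le> normal_tail_lb l z"
    using normal_tail_lb_antimono[OF l z] .
  also have "\<dots> \<le> Q"
    unfolding Q_def z_def using sd0 False by (intro normal_tail_ge_lb l) auto
  finally have "normal_tail_lb l ((m1 - m) / sd0) \<le> Q" .
  moreover have "Q \<le> 1"
    unfolding Q_def using sd0 by (intro prob_space.prob_le_1 prob_space_normal_density) auto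
  moreover have "(m1 - m) / sd0 > 0" using False \<tau> sd0 by simp
  ultimately show ?thesis
    using normal_tail_lb_pos[OF l, of "(m1 - m) / sd0"]
    by (auto simp: odds_majorant_def field_simps)
qed

text \<open>The ratio of the standard deviation \<sigma>/\<surd>s of a sample mean to the smallest standard
  deviation of the ReBoot index, which is attained when RSS = 0.\<close>

definition reboot_scale :: "real \<Rightarrow> real \<Rightarrow> nat \<Rightarrow> real" where
  "reboot_scale \<sigma> \<sigma>a s = \<sigma> / (sqrt (real s) * (sqrt (PRSS \<sigma>a s) / (real s + 2)))"

lemma Nrb_le_odds_majorant:
  assumes s: "s \<ge> 1" and \<sigma>: "\<sigma> > 0" and \<sigma>a: "\<sigma>a > 0" and \<tau>: "\<tau> < m1" and l: "l > 0"
  shows "0 \<le> Nrb \<sigma>a y s \<tau> \<and>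
    Nrb \<sigma>a y s \<tau> \<le> odds_majorant l (reboot_scale \<sigma> \<sigma>a s * ((m1 - ybar y s) * sqrt (real s) / \<sigma>))"
proof -
  define sd0 where "sd0 = sqrt (PRSS \<sigma>a s) / (real s + 2)"
  have sd0: "sd0 > 0" unfolding sd0_def PRSS_def using \<sigma>a by simp
  have "RSS y s \<ge> 0" unfolding RSS_def by (simp add: sum_nonneg)
  then have "sd0 \<le> sqrt (RSS y s + PRSS \<sigma>a s) / (real s + 2)"
    unfolding sd0_def by (intro divide_right_mono) auto
  moreover have "reboot_scale \<sigma> \<sigma>a s * ((m1 - ybar y s) * sqrt (real s) / \<sigma>) = (m1 - ybar y s) / sd0"
    unfolding reboot_scale_def sd0_def[symmetric] using s \<sigma> sd0 by (simp add: field_simps)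
  ultimately show ?thesis
    unfolding Nrb_def Qrb_def reboot_law_def using normal_odds_le_odds_majorant[OF sd0 _ l \<tau>] by simp
qed

lemma reboot_scale_bounds:
  assumes s: "s \<ge> 1" and \<sigma>: "\<sigma> > 0" and \<sigma>a: "\<sigma>a > 0" and r: "\<sigma>a / \<sigma> > 3/2"
  defines "c \<equiv> reboot_scale \<sigma> \<sigma>a s"
  shows "c \<ge> 0" "c\<^sup>2 < 2/3" "11/10 + 1 / sqrt (1 - 3/2 * c\<^sup>2) \<le> Mbound (\<sigma>a / \<sigma>)"
proof -
  define r where "r = \<sigma>a / \<sigma>"
  have "r > 3/2" using r unfolding r_def .
  show "c \<ge> 0" unfolding c_def reboot_scale_def PRSS_def using \<sigma> by (intro divide_nonneg_nonneg) auto
  have "c\<^sup>2 = \<sigma>\<^sup>2 * (real s + 2)\<^sup>2 / (real s * PRSS \<sigma>a s)"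
  proof -
    have "PRSS \<sigma>a s > 0" unfolding PRSS_def using \<sigma>a by simp
    then show ?thesis
      unfolding c_def reboot_scale_def using s
      by (simp add: power_divide power_mult_distrib field_simps) (simp add: power2_eq_square algebra_simps)
  qed
  also have "\<dots> = (real s + 2) * (\<sigma>\<^sup>2 * (real s + 2)) / ((real s + 2) * (2 * real s * \<sigma>a\<^sup>2))"
    unfolding PRSS_def by (simp add: power2_eq_square ac_simps)
  also have "\<dots> = \<sigma>\<^sup>2 * (real s + 2) / (2 * real s * \<sigma>a\<^sup>2)"
    by (rule mult_divide_mult_cancel_left) simp
  also have "\<dots> = (real s + 2) / (2 * real s * r\<^sup>2)"
    unfolding r_def using s \<sigma> \<sigma>a by (simp add: power_divide field_simps)
  also have "\<dots> \<le> 3 * real s / (2 * real s * r\<^sup>2)"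
    using s \<open>r > 3/2\<close> by (intro divide_right_mono) auto
  also have "\<dots> = 2/3 * (3 / (2 * r))\<^sup>2"
    using s \<open>r > 3/2\<close> by (simp add: field_simps power2_eq_square)
  finally have c2: "3/2 * c\<^sup>2 \<le> (3 / (2 * r))\<^sup>2" by simp
  have lt: "(3 / (2 * r))\<^sup>2 < 1"
    using \<open>r > 3/2\<close> by (simp add: power_less_one_iff divide_less_eq)
  then show "c\<^sup>2 < 2/3" using c2 by simp
  have "1 / sqrt (1 - 3/2 * c\<^sup>2) \<le> 1 / sqrt (1 - (3 / (2 * r))\<^sup>2)"
    using c2 lt by (intro divide_left_mono) auto
  then show "11/10 + 1 / sqrt (1 - 3/2 * c\<^sup>2) \<le> Mbound (\<sigma>a / \<sigma>)"
    unfolding Mbound_def r_def by simp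
qed

section \<open>Measurability and expectations\<close>

lemma measurable_normal_tail_prob:
  "(\<lambda>p::real \<times> real. measure (density lborel (normal_density (fst p) (snd p))) {t<..}) \<in> borel_measurable borel"
proof -
  let ?f = "\<lambda>q::(real \<times> real) \<times> real. ennreal (normal_density (fst (fst q)) (snd (fst q)) (snd q)) * indicator {t<..} (snd q)"
  have "?f \<in> borel_measurable ((borel \<Otimes>\<^sub>M borel) \<Otimes>\<^sub>M borel)"
    unfolding normal_density_def by measurable
  moreover have sets_eq: "sets ((borel \<Otimes>\<^sub>M borel) \<Otimes>\<^sub>M (borel :: real measure)) = sets ((borel :: (real \<times> real) measure) \<Otimes>\<^sub>M lborel)"
    by (rule sets_pair_measure_cong) (simp only: borel_prod, simp)
  ultimately have "?f \<in> borel_measurable ((borel :: (real \<times> real) measure) \<Otimes>\<^sub>M lborel)"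
    by (simp add: measurable_cong_sets[OF sets_eq refl])
  then have "(\<lambda>p::real \<times> real. \<integral>\<^sup>+x. ennreal (normal_density (fst p) (snd p) x) * indicator {t<..} x \<partial>lborel)
      \<in> borel_measurable borel"
    using lborel.borel_measurable_nn_integral[of "\<lambda>p x. ennreal (normal_density (fst p) (snd p) x) * indicator {t<..} x" borel]
    by (simp add: split_beta')
  moreover have eq: "measure (density lborel (normal_density (fst p) (snd p))) {t<..}
      = enn2real (\<integral>\<^sup>+x. ennreal (normal_density (fst p) (snd p) x) * indicator {t<..} x \<partial>lborel)" for p :: "real \<times> real"
    unfolding measure_def by (subst emeasure_density) auto
  ultimately show ?thesis unfolding eq by measurable
qed

lemma measurable_Nrb:
  assumes [measurable]: "\<And>i. i \<in> {1..s} \<Longrightarrow> X i \<in> borel_measurable M"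
  shows "(\<lambda>\<omega>. Nrb \<sigma>a (\<lambda>i. X i \<omega>) s \<tau>) \<in> borel_measurable M"
proof -
  have mean [measurable]: "(\<lambda>\<omega>. ybar (\<lambda>i. X i \<omega>) s) \<in> borel_measurable M"
    unfolding ybar_def by (intro borel_measurable_divide borel_measurable_sum) auto
  have "(\<lambda>\<omega>. RSS (\<lambda>i. X i \<omega>) s) \<in> borel_measurable M"
    unfolding RSS_def by (intro borel_measurable_sum borel_measurable_power borel_measurable_diff) auto
  then have "(\<lambda>\<omega>. (ybar (\<lambda>i. X i \<omega>) s, sqrt (RSS (\<lambda>i. X i \<omega>) s + PRSS \<sigma>a s) / (real s + 2)))
      \<in> borel_measurable M"
    by measurable
  from measurable_compose[OF this measurable_normal_tail_prob] show ?thesis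
    unfolding Nrb_def Qrb_def reboot_law_def by simp
qed

lemma (in prob_space) std_normal_standardized_sum:
  assumes I: "finite I" "I \<noteq> {}" and indep: "indep_vars (\<lambda>_. borel) X I" and \<sigma>: "\<sigma> > 0"
    and normal: "\<And>i. i \<in> I \<Longrightarrow> distributed M lborel (X i) (normal_density \<mu> \<sigma>)"
  shows "distributed M lborel (\<lambda>\<omega>. (\<mu> - (\<Sum>i\<in>I. X i \<omega>) / card I) * sqrt (card I) / \<sigma>) std_normal_density"
proof -
  define n where "n = real (card I)"
  have n: "n > 0" unfolding n_def using I by (simp add: card_gt_0_iff)
  have "distributed M lborel (\<lambda>\<omega>. \<Sum>i\<in>I. X i \<omega>) (normal_density (n * \<mu>) (sqrt (n * \<sigma>\<^sup>2)))"
    using sum_indep_normal[OF I indep, of "\<lambda>_. \<sigma>" "\<lambda>_. \<mu>"] \<sigma> normal by (simp add: n_def)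
  then have "distributed M lborel (\<lambda>\<omega>. \<mu> * sqrt n / \<sigma> + (- 1 / (sqrt n * \<sigma>)) * (\<Sum>i\<in>I. X i \<omega>))
      (normal_density (\<mu> * sqrt n / \<sigma> + (- 1 / (sqrt n * \<sigma>)) * (n * \<mu>))
        (\<bar>- 1 / (sqrt n * \<sigma>)\<bar> * sqrt (n * \<sigma>\<^sup>2)))"
    using n \<sigma> by (intro normal_density_affine) auto
  moreover have "\<mu> * sqrt n / \<sigma> + (- 1 / (sqrt n * \<sigma>)) * (n * \<mu>) = 0"
    using n \<sigma> by (simp add: field_simps real_sqrt_mult[symmetric])
  moreover have "\<bar>- 1 / (sqrt n * \<sigma>)\<bar> * sqrt (n * \<sigma>\<^sup>2) = 1"
    using n \<sigma> by (simp add: real_sqrt_mult)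
  moreover have "\<mu> * sqrt n / \<sigma> + (- 1 / (sqrt n * \<sigma>)) * y = (\<mu> - y / n) * sqrt n / \<sigma>" for y
    using n \<sigma> by (simp add: field_simps real_sqrt_mult[symmetric])
  ultimately show ?thesis by (simp add: n_def)
qed

lemma (in prob_space) std_normal_standardized_row_mean:
  assumes indep: "indep_vars (\<lambda>_. borel) (\<lambda>(j, i). Y j i) (J \<times> {1..})" and j: "j \<in> J"
    and s: "s \<ge> 1" and \<sigma>: "\<sigma> > 0"
    and normal: "\<And>i. i \<ge> 1 \<Longrightarrow> distributed M lborel (Y j i) (normal_density \<mu> \<sigma>)"
  shows "distributed M lborel (\<lambda>\<omega>. (\<mu> - ybar (\<lambda>i. Y j i \<omega>) s) * sqrt (real s) / \<sigma>) std_normal_density"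
proof -
  let ?I = "Pair j ` {1..s}"
  have "inj_on (Pair j) {1..s}" by (simp add: inj_on_def)
  then have "(\<Sum>p\<in>?I. (\<lambda>(j, i). Y j i) p \<omega>) = (\<Sum>i=1..s. Y j i \<omega>)" and "card ?I = s" for \<omega>
    by (simp_all add: sum.reindex card_image)
  moreover have "distributed M lborel
      (\<lambda>\<omega>. (\<mu> - (\<Sum>p\<in>?I. (\<lambda>(j, i). Y j i) p \<omega>) / card ?I) * sqrt (card ?I) / \<sigma>) std_normal_density"
    using j s normal by (intro std_normal_standardized_sum indep_vars_subset[OF indep] \<sigma>) auto
  ultimately show ?thesis unfolding ybar_def by simp
qed

lemma (in prob_space) integral_min_le:
  fixes f g :: "'a \<Rightarrow> real"
  assumes [measurable]: "f \<in> borel_measurable M" and "integrable M g"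
    and "\<And>\<omega>. 0 \<le> f \<omega>" "\<And>\<omega>. f \<omega> \<le> g \<omega>"
  shows "integrable M (\<lambda>\<omega>. min (f \<omega>) T) \<and> (\<integral>\<omega>. min (f \<omega>) T \<partial>M) \<le> (\<integral>\<omega>. g \<omega> \<partial>M)"
proof
  show int: "integrable M (\<lambda>\<omega>. min (f \<omega>) T)"
  proof (rule integrable_const_bound[where B = "\<bar>T\<bar>"])
    show "AE \<omega> in M. norm (min (f \<omega>) T) \<le> \<bar>T\<bar>"
      using assms(3) by (intro AE_I2) (smt (verit) real_norm_def)
  qed simp
  show "(\<integral>\<omega>. min (f \<omega>) T \<partial>M) \<le> (\<integral>\<omega>. g \<omega> \<partial>M)"
    by (intro integral_mono int assms(2)) (use assms(4) in \<open>auto intro: min.coboundedI1\<close>)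
qed

theorem mainTheorem3:
  fixes M :: "'a measure" and Y :: "nat \<Rightarrow> nat \<Rightarrow> 'a \<Rightarrow> real"
    and K k s T :: nat and \<mu> :: "nat \<Rightarrow> real" and \<sigma> \<sigma>a :: real
  assumes "prob_space M"
    and "\<sigma> > 0" and "\<sigma>a > 0" and "\<sigma>a / \<sigma> > 3/2"
    and "k \<in> {1..K}"
    and "\<forall>j\<in>{1..K}. \<mu> j \<le> \<mu> 1"
    and "\<mu> 1 - \<mu> k > 0"
    and "prob_space.indep_vars M (\<lambda>_. borel) (\<lambda>(j, i). Y j i) ({1..K} \<times> {1..})"
    and "\<forall>j\<in>{1..K}. \<forall>i\<ge>1. distributed M lborel (Y j i) (normal_density (\<mu> j) \<sigma>)"
    and "s \<ge> 1"
  shows "integrable M (\<lambda>\<omega>. min (Nrb \<sigma>a (\<lambda>i. Y 1 i \<omega>) s ((\<mu> 1 + \<mu> k) / 2)) (real T))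
    \<and> (\<integral>\<omega>. min (Nrb \<sigma>a (\<lambda>i. Y 1 i \<omega>) s ((\<mu> 1 + \<mu> k) / 2)) (real T) \<partial>M)
        \<le> Mbound (\<sigma>a / \<sigma>)"
proof -
  interpret prob_space M by fact
  have arm1: "1 \<in> {1..K}" using assms(5) by auto
  define c where "c = reboot_scale \<sigma> \<sigma>a s"
  note c = reboot_scale_bounds[OF assms(10,2,3,4), folded c_def]
  obtain l where l: "l > 0"
    and int: "integrable lborel (\<lambda>x. std_normal_density x * odds_majorant l (c * x))"
    and bound: "(\<integral>x. std_normal_density x * odds_majorant l (c * x) \<partial>lborel) \<le> 11/10 + 1 / sqrt (1 - 3/2 * c\<^sup>2)"
    using exists_odds_majorant_integral_le[OF c(1,2)] by blast
  define W where "W \<omega> = (\<mu> 1 - ybar (\<lambda>i. Y 1 i \<omega>) s) * sqrt (real s) / \<sigma>" for \<omega>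
  have W: "distributed M lborel W std_normal_density"
    unfolding W_def using assms(9) arm1
    by (intro std_normal_standardized_row_mean[OF assms(8) arm1 assms(10,2)]) auto
  have Y: "Y 1 i \<in> borel_measurable M" if "i \<in> {1..s}" for i
    using assms(9) arm1 that by (metis atLeastAtMost_iff distributed_measurable measurable_lborel1)
  define N where "N \<omega> = Nrb \<sigma>a (\<lambda>i. Y 1 i \<omega>) s ((\<mu> 1 + \<mu> k) / 2)" for \<omega>
  have "(\<mu> 1 + \<mu> k) / 2 < \<mu> 1" using assms(7) by simp
  from Nrb_le_odds_majorant[OF assms(10,2,3) this l]
  have "integrable M (\<lambda>\<omega>. min (N \<omega>) (real T))
    \<and> (\<integral>\<omega>. min (N \<omega>) (real T) \<partial>M) \<le> (\<integral>\<omega>. odds_majorant l (c * W \<omega>) \<partial>M)"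
    using distributed_integrable[OF W] int unfolding N_def
    by (intro integral_min_le measurable_Nrb Y) (auto simp: c_def W_def)
  moreover have "(\<integral>\<omega>. odds_majorant l (c * W \<omega>) \<partial>M)
      = (\<integral>x. std_normal_density x * odds_majorant l (c * x) \<partial>lborel)"
    using distributed_integral[OF W, of "\<lambda>x. odds_majorant l (c * x)"] by simp
  ultimately show ?thesis using bound c(3) unfolding N_def by linarith
qed

end
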